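(* Assume $q\neq 0$, $d\neq 0$ and $A\neq 0$. For every integer $n$ let $x_n=h_{n+1}-qh_{n-1}$. Then for all integers $n$ and $k$, $$\left(\frac{x_n+h_n d}{2Ad}\right)^k=\frac{x_{kn}+h_{kn}d}{2Ad}.$$
   Context: Let $p,q,a,b$ be complex numbers. Fix $d=\sqrt{p^2-4q}$ and put $\alpha=\frac{p+d}{2}$, $\beta=\frac{p-d}{2}$, $A=b-a\beta$. The Horadam-Lucas sequence $(h_n)$ is defined by $h_0=2b-ap$, $h_1=bp-2aq$, and $h_n=ph_{n-1}-qh_{n-2}$. Since $q\neq 0$, it is extended to all integer indices by $h_{n-2}=(ph_{n-1}-h_n)/q$. *)

theory Defs
  imports Complex_Main
begin

fun hl_pos :: "complex \<Rightarrow> complex \<Rightarrow> complex \<Rightarrow> complex \<Rightarrow> nat \<Rightarrow> complex" where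
  "hl_pos p q a b 0 = 2*b - a*p"
| "hl_pos p q a b (Suc 0) = b*p - 2*a*q"
| "hl_pos p q a b (Suc (Suc n)) = p * hl_pos p q a b (Suc n) - q * hl_pos p q a b n"

text \<open>hl_neg m is h_{-m}.\<close>
fun hl_neg :: "complex \<Rightarrow> complex \<Rightarrow> complex \<Rightarrow> complex \<Rightarrow> nat \<Rightarrow> complex" where
  "hl_neg p q a b 0 = 2*b - a*p"
| "hl_neg p q a b (Suc 0) = (p * (2*b - a*p) - (b*p - 2*a*q)) / q"
| "hl_neg p q a b (Suc (Suc m)) = (p * hl_neg p q a b (Suc m) - hl_neg p q a b m) / q"

definition horadam_lucas :: "complex \<Rightarrow> complex \<Rightarrow> complex \<Rightarrow> complex \<Rightarrow> int \<Rightarrow> complex" where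
  "horadam_lucas p q a b n =
     (if 0 \<le> n then hl_pos p q a b (nat n) else hl_neg p q a b (nat (- n)))"

definition hl_d :: "complex \<Rightarrow> complex \<Rightarrow> complex" where
  "hl_d p q = csqrt (p^2 - 4*q)"

definition hl_beta :: "complex \<Rightarrow> complex \<Rightarrow> complex" where
  "hl_beta p q = (p - hl_d p q) / 2"

definition hl_A :: "complex \<Rightarrow> complex \<Rightarrow> complex \<Rightarrow> complex \<Rightarrow> complex" where
  "hl_A p q a b = b - a * hl_beta p q"

definition hl_x :: "complex \<Rightarrow> complex \<Rightarrow> complex \<Rightarrow> complex \<Rightarrow> int \<Rightarrow> complex" where
  "hl_x p q a b n = horadam_lucas p q a b (n+1) - q * horadam_lucas p q a b (n-1)"

end

theory Submission
  imports Defs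
begin

text \<open>By the Binet formula h_n = A \<alpha>^n + B \<beta>^n with B = b - a \<alpha>, and since \<alpha> - q/\<alpha> = \<alpha> - \<beta> = d
  while \<beta> - q/\<beta> = -d, one gets x_n + h_n d = 2 A d \<alpha>^n. The quotient in the theorem is therefore
  just \<alpha>^n, and the claim becomes (\<alpha>^n)^k = \<alpha>^(kn).\<close>

definition hl_alpha :: "complex \<Rightarrow> complex \<Rightarrow> complex" where
  "hl_alpha p q = (p + hl_d p q) / 2"

lemma hl_alpha_plus_beta: "hl_alpha p q + hl_beta p q = p"
  by (simp add: hl_alpha_def hl_beta_def field_simps)

lemma hl_alpha_minus_beta: "hl_alpha p q - hl_beta p q = hl_d p q"
  by (simp add: hl_alpha_def hl_beta_def field_simps)

lemma hl_alpha_times_beta: "hl_alpha p q * hl_beta p q = q"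
proof -
  have "(hl_d p q)^2 = p^2 - 4*q"
    by (simp add: hl_d_def)
  then show ?thesis
    by (simp add: hl_alpha_def hl_beta_def field_simps power2_eq_square)
qed

lemma power_int_characteristic_recurrence:
  fixes r p q :: "'a :: field"
  assumes "r \<noteq> 0" and "r^2 = p * r - q"
  shows "r powi (n + 2) = p * r powi (n + 1) - q * r powi n"
proof -
  have "r powi (n + 2) = r powi n * r^2" "r powi (n + 1) = r powi n * r"
    using assms(1) by (simp_all add: power_int_add)
  then show ?thesis
    using assms(2) by (simp add: algebra_simps)
qed

lemma horadam_lucas_unique:
  assumes "q \<noteq> 0"
    and f0: "f 0 = 2*b - a*p" and f1: "f 1 = b*p - 2*a*q"
    and rec: "\<And>n. f (n + 2) = p * f (n + 1) - q * f n"
  shows "horadam_lucas p q a b n = f n"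
proof -
  have pos: "hl_pos p q a b m = f (int m) \<and> hl_pos p q a b (Suc m) = f (int m + 1)" for m
    by (induction m) (use f0 f1 rec in \<open>simp_all add: algebra_simps\<close>)
  have backward: "f (n - 2) = (p * f (n - 1) - f n) / q" for n
    using rec[of "n - 2"] \<open>q \<noteq> 0\<close> by (simp add: field_simps)
  have neg: "hl_neg p q a b m = f (- int m) \<and> hl_neg p q a b (Suc m) = f (- int (Suc m))" for m
  proof (induction m)
    case 0
    then show ?case
      using f0 f1 backward[of 1] by simp
  next
    case (Suc m)
    have "- int (Suc m) = - int m - 1" "- int (Suc (Suc m)) = - int m - 2"
      by simp_all
    with Suc show ?case
      using backward[of "- int m"] by (metis hl_neg.simps(3))
  qed
  show ?thesis
    unfolding horadam_lucas_def using pos[of "nat n"] neg[of "nat (- n)"] by auto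
qed

lemma horadam_lucas_binet:
  assumes "q \<noteq> 0" and sum: "\<alpha> + \<beta> = p" and prod: "\<alpha> * \<beta> = q"
  shows "horadam_lucas p q a b n = (b - a * \<beta>) * \<alpha> powi n + (b - a * \<alpha>) * \<beta> powi n"
proof (rule horadam_lucas_unique[OF assms(1)])
  have nonzero: "\<alpha> \<noteq> 0" "\<beta> \<noteq> 0"
    using prod assms(1) by auto
  have "\<alpha>^2 = p * \<alpha> - q" "\<beta>^2 = p * \<beta> - q"
    by (simp_all add: power2_eq_square algebra_simps flip: sum prod)
  note rec = power_int_characteristic_recurrence[OF nonzero(1) this(1)]
    power_int_characteristic_recurrence[OF nonzero(2) this(2)]
  show "(b - a * \<beta>) * \<alpha> powi (n + 2) + (b - a * \<alpha>) * \<beta> powi (n + 2)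
      = p * ((b - a * \<beta>) * \<alpha> powi (n + 1) + (b - a * \<alpha>) * \<beta> powi (n + 1))
        - q * ((b - a * \<beta>) * \<alpha> powi n + (b - a * \<alpha>) * \<beta> powi n)" for n
    by (simp add: rec algebra_simps)
  show "(b - a * \<beta>) * \<alpha> powi 0 + (b - a * \<alpha>) * \<beta> powi 0 = 2*b - a*p"
    by (simp add: algebra_simps flip: sum)
  show "(b - a * \<beta>) * \<alpha> powi 1 + (b - a * \<alpha>) * \<beta> powi 1 = b*p - 2*a*q"
    by (simp add: algebra_simps flip: sum prod)
qed

lemma hl_x_plus_horadam_lucas_times_d:
  assumes "q \<noteq> 0" and sum: "\<alpha> + \<beta> = p" and prod: "\<alpha> * \<beta> = q" and diff: "\<alpha> - \<beta> = d"
  shows "hl_x p q a b n + horadam_lucas p q a b n * d = 2 * (b - a * \<beta>) * d * \<alpha> powi n"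
proof -
  have nonzero: "\<alpha> \<noteq> 0" "\<beta> \<noteq> 0"
    using prod assms(1) by auto
  have shift: "\<alpha> powi (n + 1) = \<alpha> * \<alpha> powi n" "q * \<alpha> powi (n - 1) = \<beta> * \<alpha> powi n"
    "\<beta> powi (n + 1) = \<beta> * \<beta> powi n" "q * \<beta> powi (n - 1) = \<alpha> * \<beta> powi n"
    using nonzero by (auto simp: power_int_add power_int_diff field_simps simp flip: prod)
  have "hl_x p q a b n + horadam_lucas p q a b n * d
      = (b - a * \<beta>) * \<alpha> powi n * (\<alpha> - \<beta> + d) + (b - a * \<alpha>) * \<beta> powi n * (\<beta> - \<alpha> + d)"
    unfolding hl_x_def horadam_lucas_binet[OF assms(1-3)] shift(1,3)
    using shift(2,4) by (simp add: algebra_simps)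
  then show ?thesis
    by (simp add: algebra_simps flip: diff)
qed

theorem mainTheorem2:
  fixes p q a b :: complex and n k :: int
  assumes "q \<noteq> 0" and "hl_d p q \<noteq> 0" and "hl_A p q a b \<noteq> 0"
  shows "((hl_x p q a b n + horadam_lucas p q a b n * hl_d p q) / (2 * hl_A p q a b * hl_d p q)) powi k
       = (hl_x p q a b (k*n) + horadam_lucas p q a b (k*n) * hl_d p q) / (2 * hl_A p q a b * hl_d p q)"
proof -
  have quotient: "(hl_x p q a b m + horadam_lucas p q a b m * hl_d p q) / (2 * hl_A p q a b * hl_d p q)
      = hl_alpha p q powi m" for m
    using assms
    by (simp add: hl_x_plus_horadam_lucas_times_d[OF _ hl_alpha_plus_beta hl_alpha_times_beta
          hl_alpha_minus_beta] hl_A_def)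
  show ?thesis
    unfolding quotient by (simp only: mult.commute[of k n] power_int_mult)
qed

end
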